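(* Let $m_a, M_a \in \mathbb{R}$ and $x_a>1$, and suppose that for all $x > x_a$ $$ x \sum_{k=0}^{4} \frac{k!}{\log^{k+1}x}+ \frac{m_a x}{\log^6 x} < \pi(x) < x \sum_{k=0}^{4} \frac{k!}{\log^{k+1}x}+\frac{M_a x}{\log^6 x}.$$ Then there exists a number $x_a'$, determined completely by $m_a$, $M_a$ and $x_a$, such that $$\pi(x)^2 < \frac{e\,x}{\log x}\,\pi\!\Big(\frac{x}{e}\Big)$$ holds for all $x > \max(e\,x_a, x_a')$.
   Context: $\pi(x)$ denotes the number of primes less than or equal to $x$; $\log$ is the natural logarithm. *)

theory Defs
  imports Complex_Main "HOL-Computational_Algebra.Primes"
begin

definition primepi :: "real \<Rightarrow> real" where
  "primepi x = real (card {p::nat. prime p \<and> real p \<le> x})"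

end

theory Submission imports Defs "HOL-Real_Asymp.Real_Asymp" begin

(*
  Write the assumed two-sided bound as  x * E m (ln x) < pi(x) < x * E M (ln x)  with
  E c L = sum_{k=0}^{4} k!/L^(k+1) + c/L^6  (the truncated asymptotic expansion of
  pi(x)/x in powers of 1/L, with a sixth-order error term of size c).
  Since ln (x/e) = ln x - 1, the desired inequality pi(x)^2 < (e x / ln x) pi(x/e) follows
  for x > e x_a from the upper bound at x and the lower bound at x/e, provided that
      E M L ^ 2 < E m (L - 1) / L,        L = ln x.
  Expanding both sides in 1/L, they agree up to order L^-5 and the right side exceeds the
  left by L^-6 + O(L^-7), whatever m and M are; hence this holds for all large L, i.e. for
  all x beyond some threshold x_a' depending only on m and M.
*)

definition pnt_expansion :: "real \<Rightarrow> real \<Rightarrow> real" where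
  "pnt_expansion c L = (\<Sum>k=0..4. fact k / L ^ (k+1)) + c / L ^ 6"

text \<open>The hypothesis of the theorem is stated with x multiplied out.\<close>
lemma times_pnt_expansion:
  "x * pnt_expansion c L = x * (\<Sum>k=0..4. fact k / L ^ (k+1)) + c * x / L ^ 6"
  by (simp add: pnt_expansion_def algebra_simps)

text \<open>The expansion written out term by term, the form needed by real_asymp.\<close>
lemma pnt_expansion_explicit:
  "pnt_expansion c L = 1/L + 1/L^2 + 2/L^3 + 6/L^4 + 24/L^5 + c/L^6"
  by (simp add: pnt_expansion_def eval_nat_numeral fact_numeral)

lemma pnt_expansion_square_eventually_less:
  "eventually (\<lambda>L. pnt_expansion M L ^ 2 < pnt_expansion m (L - 1) / L) at_top"
  unfolding pnt_expansion_explicit by real_asymp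

lemma square_less_from_bounds:
  fixes p q x L A B :: real
  assumes "0 \<le> p" "p < x * A" "x / exp 1 * B < q" "A ^ 2 < B / L" "x > 0" "L > 0"
  shows "p ^ 2 < exp 1 * x / L * q"
proof -
  have "p ^ 2 < (x * A) ^ 2"
    using assms(1,2) by (intro power_strict_mono) auto
  also have "\<dots> = x ^ 2 * A ^ 2"
    by (rule power_mult_distrib)
  also have "\<dots> < x ^ 2 * (B / L)"
    using assms(4,5) by (intro mult_strict_left_mono) auto
  also have "\<dots> = exp 1 * x / L * (x / exp 1 * B)"
    by (simp add: power2_eq_square)
  also have "\<dots> < exp 1 * x / L * q"
    using assms(3,5,6) by (intro mult_strict_left_mono) auto
  finally show ?thesis .
qed

lemma beyond_exp_scaled:
  fixes x x_a :: real
  assumes "x_a > 1" "x > exp 1 * x_a"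
  shows "x > x_a" "x / exp 1 > x_a" "ln x > 1" "ln (x / exp 1) = ln x - 1"
proof -
  show xe: "x / exp 1 > x_a"
    using assms(2) by (simp add: field_simps)
  have "x_a < exp 1 * x_a"
    using assms(1) by simp
  then show "x > x_a"
    using assms(2) by linarith
  have "exp 1 < exp 1 * x_a"
    using assms(1) by simp
  then have x_gt_e: "exp 1 < x"
    using assms(2) by linarith
  then show "ln x > 1"
    using ln_less_cancel_iff[of "exp 1" x] exp_gt_zero[of 1] by simp
  have "x > 0"
    using x_gt_e exp_gt_zero[of 1] by linarith
  then show "ln (x / exp 1) = ln x - 1"
    by (simp add: ln_div)
qed

theorem lemma1:
  fixes m_a M_a x_a :: real
  assumes "x_a > 1"
  assumes "\<And>x. x > x_a \<Longrightarrow>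
      x * (\<Sum>k=0..4. fact k / ln x ^ (k+1)) + m_a * x / ln x ^ 6 < primepi x \<and>
      primepi x < x * (\<Sum>k=0..4. fact k / ln x ^ (k+1)) + M_a * x / ln x ^ 6"
  shows "\<exists>x_a'. \<forall>x. x > max (exp 1 * x_a) x_a' \<longrightarrow>
      primepi x ^ 2 < exp 1 * x / ln x * primepi (x / exp 1)"
proof -
  have bounds: "x * pnt_expansion m_a (ln x) < primepi x \<and> primepi x < x * pnt_expansion M_a (ln x)"
    if "x > x_a" for x
    using assms(2)[OF that] by (simp only: times_pnt_expansion)
  have "eventually (\<lambda>x. pnt_expansion M_a (ln x) ^ 2 < pnt_expansion m_a (ln x - 1) / ln x) at_top"
    using pnt_expansion_square_eventually_less ln_at_top by (rule eventually_compose_filterlim)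
  then obtain x0 where x0: "\<And>x. x \<ge> x0 \<Longrightarrow>
      pnt_expansion M_a (ln x) ^ 2 < pnt_expansion m_a (ln x - 1) / ln x"
    by (auto simp: eventually_at_top_linorder)
  have "primepi x ^ 2 < exp 1 * x / ln x * primepi (x / exp 1)"
    if x: "x > max (exp 1 * x_a) x0" for x
  proof -
    note beyond = beyond_exp_scaled[OF assms(1), of x]
    show ?thesis
    proof (rule square_less_from_bounds)
      show "primepi x < x * pnt_expansion M_a (ln x)"
        using bounds beyond x by simp
      show "x / exp 1 * pnt_expansion m_a (ln x - 1) < primepi (x / exp 1)"
        using bounds[of "x / exp 1"] beyond x by simp
      show "pnt_expansion M_a (ln x) ^ 2 < pnt_expansion m_a (ln x - 1) / ln x"
        using x0 x by simp
    qed (use beyond x assms(1) in \<open>auto simp: primepi_def\<close>)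
  qed
  then show ?thesis by blast
qed

end
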